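(* Let $N$ be a torsion-free finitely generated nilpotent group of nilpotency class $2$ with a finite generating subset $S$. For $x\in N$ let $I_x=\{[y,x]: y\in N\}\le\gamma_2(N)$, where $[a,b]=aba^{-1}b^{-1}$. Then there exists $C>0$ such that $\|I_x\|_S\le C\sqrt{\|x\|_S}$ for every $x\in N$.
   Context: $\|\cdot\|_S$ is word length; for a subgroup $H$, $\|H\|_S=\min\{\max_{h\in X}\|h\|_S: X\text{ a finite generating subset of }H\}$. In class $2$, $y\mapsto[y,x]=y\,x\,y^{-1}x^{-1}$ is a homomorphism $N\to\gamma_2(N)=[N,N]$ and $I_x$ is its image (the image of the map $\psi_{\mathrm{Inn}(x),2}$ in the paper). *)

theory Defs
  imports "HOL-Algebra.Algebra" Complex_Main
begin

definition comm :: "('a, 'b) monoid_scheme \<Rightarrow> 'a \<Rightarrow> 'a \<Rightarrow> 'a" where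
  "comm G a b = a \<otimes>\<^bsub>G\<^esub> b \<otimes>\<^bsub>G\<^esub> inv\<^bsub>G\<^esub> a \<otimes>\<^bsub>G\<^esub> inv\<^bsub>G\<^esub> b"

text \<open>Nilpotent of class exactly 2: all commutators are central (gamma_3 = 1), but the
  group is not abelian (gamma_2 is nontrivial).\<close>
definition nilpotent_class2 :: "('a, 'b) monoid_scheme \<Rightarrow> bool" where
  "nilpotent_class2 G \<longleftrightarrow>
     (\<forall>a\<in>carrier G. \<forall>b\<in>carrier G. \<forall>c\<in>carrier G. comm G (comm G a b) c = \<one>\<^bsub>G\<^esub>) \<and>
     (\<exists>a\<in>carrier G. \<exists>b\<in>carrier G. comm G a b \<noteq> \<one>\<^bsub>G\<^esub>)"

definition torsion_free :: "('a, 'b) monoid_scheme \<Rightarrow> bool" where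
  "torsion_free G \<longleftrightarrow>
     (\<forall>x\<in>carrier G. \<forall>n::nat. n > 0 \<longrightarrow> x [^]\<^bsub>G\<^esub> n = \<one>\<^bsub>G\<^esub> \<longrightarrow> x = \<one>\<^bsub>G\<^esub>)"

definition word_length :: "('a, 'b) monoid_scheme \<Rightarrow> 'a set \<Rightarrow> 'a \<Rightarrow> nat" where
  "word_length G S g = (LEAST n. \<exists>ws. length ws = n \<and>
      set ws \<subseteq> S \<union> (\<lambda>s. inv\<^bsub>G\<^esub> s) ` S \<and> foldr (\<lambda>a b. a \<otimes>\<^bsub>G\<^esub> b) ws \<one>\<^bsub>G\<^esub> = g)"

text \<open>\<parallel>H\<parallel>_S = min over finite generating subsets X of H of max_{h\<in>X} \<parallel>h\<parallel>_S
  (the empty maximum being 0).\<close>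
definition subgroup_norm :: "('a, 'b) monoid_scheme \<Rightarrow> 'a set \<Rightarrow> 'a set \<Rightarrow> nat" where
  "subgroup_norm G S H = (LEAST m. \<exists>T. finite T \<and> T \<subseteq> H \<and> generate G T = H \<and>
      (\<forall>h\<in>T. word_length G S h \<le> m))"

definition I_sub :: "('a, 'b) monoid_scheme \<Rightarrow> 'a \<Rightarrow> 'a set" where
  "I_sub G x = (\<lambda>y. comm G y x) ` carrier G"

end

theory Submission
  imports Defs "HOL-Library.Discrete_Functions"
begin

text \<open>
  In class 2 the maps \<open>y \<mapsto> [y,x]\<close> and \<open>x \<mapsto> [s,x]\<close> are homomorphisms into the
  centre, so \<open>I\<^sub>x\<close> is generated by the \<open>[s,x]\<close> with \<open>s \<in> S\<close>, and for a geodesic word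
  \<open>x = a\<^sub>1\<cdots>a\<^sub>n\<close> we get \<open>[s,x] = \<Prod>\<^sub>a [s,a]\<^bsup>m\<^sub>a\<^esup>\<close>, where \<open>m\<^sub>a \<le> n\<close> counts the occurrences of
  the letter \<open>a\<close>. Each factor is short: writing \<open>m = k\<^sup>2 + r\<close> with \<open>r \<le> 2k\<close>, the power
  \<open>[s,a]\<^bsup>k\<^sup>2\<^esup> = [s\<^sup>k, a\<^sup>k]\<close> has length at most \<open>4k\<close>, so \<open>[s,a]\<^sup>m\<close> has length \<open>O(\<surd>m)\<close>.
\<close>

lemma (in group) comm_closed [simp]:
  "a \<in> carrier G \<Longrightarrow> b \<in> carrier G \<Longrightarrow> comm G a b \<in> carrier G"
  by (simp add: comm_def)

lemma (in group) comm_eq_one_iff: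
  assumes "a \<in> carrier G" "b \<in> carrier G"
  shows "comm G a b = \<one> \<longleftrightarrow> a \<otimes> b = b \<otimes> a"
proof -
  have "comm G a b = a \<otimes> b \<otimes> inv (b \<otimes> a)"
    using assms by (simp add: comm_def inv_mult_group m_assoc)
  then show ?thesis
    using assms by (simp add: inv_solve_right')
qed

lemma (in group) inv_comm_eq:
  assumes "a \<in> carrier G" "b \<in> carrier G"
  shows "inv (comm G a b) = comm G b a"
  using assms by (simp add: comm_def inv_mult_group m_assoc)

lemma (in group) conj_eq_comm_mult:
  assumes "a \<in> carrier G" "b \<in> carrier G"
  shows "a \<otimes> b \<otimes> inv a = comm G a b \<otimes> b"
  using assms by (simp add: comm_def m_assoc)

definition (in monoid) word_eval :: "'a list \<Rightarrow> 'a" where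
  "word_eval ws = foldr (\<lambda>a b. a \<otimes> b) ws \<one>"

lemma (in monoid) word_eval_simps [simp]:
  "word_eval [] = \<one>"
  "word_eval (w # ws) = w \<otimes> word_eval ws"
  by (simp_all add: word_eval_def)

lemma (in monoid) word_eval_closed [simp]:
  "set ws \<subseteq> carrier G \<Longrightarrow> word_eval ws \<in> carrier G"
  by (induct ws) auto

lemma (in monoid) word_eval_append:
  "set ws \<subseteq> carrier G \<Longrightarrow> set vs \<subseteq> carrier G \<Longrightarrow> word_eval (ws @ vs) = word_eval ws \<otimes> word_eval vs"
  by (induct ws) (auto simp: m_assoc)

lemma (in monoid) word_eval_filter_eq:
  "a \<in> carrier G \<Longrightarrow> word_eval (filter (\<lambda>w. w = a) ws) = a [^] count_list ws a"
  by (induct ws) (auto, metis nat_pow_Suc nat_pow_Suc2)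

lemma (in group) inv_word_eval:
  "set ws \<subseteq> carrier G \<Longrightarrow> inv (word_eval ws) = word_eval (rev (map (\<lambda>w. inv w) ws))"
proof (induct ws)
  case (Cons w ws)
  have "set (rev (map (\<lambda>w. inv w) ws)) \<subseteq> carrier G"
    using Cons.prems by auto
  then show ?case
    using Cons by (simp add: word_eval_append inv_mult_group)
qed simp

locale class2_group = group +
  assumes comm_central:
    "\<lbrakk>a \<in> carrier G; b \<in> carrier G; c \<in> carrier G\<rbrakk> \<Longrightarrow> comm G a b \<otimes> c = c \<otimes> comm G a b"
begin

lemma comm_mult_left:
  assumes "y1 \<in> carrier G" "y2 \<in> carrier G" "x \<in> carrier G"
  shows "comm G (y1 \<otimes> y2) x = comm G y1 x \<otimes> comm G y2 x"
proof -
  have "comm G (y1 \<otimes> y2) x = y1 \<otimes> (y2 \<otimes> x \<otimes> inv y2) \<otimes> inv y1 \<otimes> inv x"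
    using assms by (simp add: comm_def m_assoc inv_mult_group)
  also have "\<dots> = y1 \<otimes> (comm G y2 x \<otimes> x) \<otimes> inv y1 \<otimes> inv x"
    using assms by (simp add: conj_eq_comm_mult)
  also have "\<dots> = comm G y2 x \<otimes> comm G y1 x"
  proof -
    define c where "c = comm G y2 x"
    have "c \<in> carrier G" "c \<otimes> y1 = y1 \<otimes> c"
      using assms comm_central[of y2 x y1] by (simp_all add: c_def)
    then have "y1 \<otimes> (c \<otimes> z) = c \<otimes> (y1 \<otimes> z)" if "z \<in> carrier G" for z
      using assms that by (simp flip: m_assoc)
    then have "y1 \<otimes> (c \<otimes> x) \<otimes> inv y1 \<otimes> inv x = c \<otimes> comm G y1 x"
      using assms \<open>c \<in> carrier G\<close> by (simp add: comm_def[of G y1] m_assoc)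
    then show ?thesis
      by (simp add: c_def)
  qed
  also have "\<dots> = comm G y1 x \<otimes> comm G y2 x"
    using assms comm_central[of y2 x "comm G y1 x"] by simp
  finally show ?thesis .
qed

lemma comm_mult_right:
  assumes "y \<in> carrier G" "x1 \<in> carrier G" "x2 \<in> carrier G"
  shows "comm G y (x1 \<otimes> x2) = comm G y x1 \<otimes> comm G y x2"
proof -
  have "comm G y (x1 \<otimes> x2) = inv (comm G (x1 \<otimes> x2) y)"
    using assms by (simp add: inv_comm_eq)
  also have "\<dots> = inv (comm G x1 y \<otimes> comm G x2 y)"
    using assms by (simp add: comm_mult_left)
  also have "\<dots> = comm G y x2 \<otimes> comm G y x1"
    using assms by (simp add: inv_mult_group inv_comm_eq)
  also have "\<dots> = comm G y x1 \<otimes> comm G y x2"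
    using assms comm_central[of y x2 "comm G y x1"] by simp
  finally show ?thesis .
qed

lemma comm_pow_left:
  assumes "a \<in> carrier G" "b \<in> carrier G"
  shows "comm G (a [^] (k::nat)) b = comm G a b [^] k"
  using assms by (induct k) (simp_all add: comm_mult_left, simp add: comm_def)

lemma comm_pow_right:
  assumes "a \<in> carrier G" "b \<in> carrier G"
  shows "comm G a (b [^] (k::nat)) = comm G a b [^] k"
  using assms by (induct k) (simp_all add: comm_mult_right, simp add: comm_def)

lemma comm_pow_pow:
  assumes "a \<in> carrier G" "b \<in> carrier G"
  shows "comm G (a [^] (k::nat)) (b [^] k) = comm G a b [^] k\<^sup>2"
  using assms by (simp add: comm_pow_left comm_pow_right nat_pow_pow power2_eq_square)

lemma comm_left_hom: "x \<in> carrier G \<Longrightarrow> (\<lambda>y. comm G y x) \<in> hom G G"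
  by (simp add: hom_def comm_mult_left)

end

lemma class2_group_if_nilpotent_class2:
  fixes G (structure)
  assumes "group G" "nilpotent_class2 G"
  shows "class2_group G"
proof -
  interpret group G by fact
  show ?thesis
  proof unfold_locales
    fix a b c
    assume abc: "a \<in> carrier G" "b \<in> carrier G" "c \<in> carrier G"
    then have "comm G (comm G a b) c = \<one>"
      using assms(2) by (simp add: nilpotent_class2_def)
    then show "comm G a b \<otimes> c = c \<otimes> comm G a b"
      using abc by (simp add: comm_eq_one_iff)
  qed
qed

lemma (in class2_group) comm_word_eval_filter:
  assumes "s \<in> carrier G" "set ws \<subseteq> carrier G"
  shows "comm G s (word_eval ws)
    = comm G s (word_eval (filter P ws)) \<otimes> comm G s (word_eval (filter (\<lambda>w. \<not> P w) ws))"
  using assms(2)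
proof (induct ws)
  case Nil
  then show ?case using assms(1) by (simp add: comm_def)
next
  case (Cons w ws)
  define c where "c = comm G s w"
  define A where "A = comm G s (word_eval (filter P ws))"
  define B where "B = comm G s (word_eval (filter (\<lambda>w. \<not> P w) ws))"
  have w: "w \<in> carrier G" and ws: "set ws \<subseteq> carrier G"
    using Cons.prems by auto
  moreover have filters: "word_eval (filter P ws) \<in> carrier G"
      "word_eval (filter (\<lambda>w. \<not> P w) ws) \<in> carrier G"
    using ws by (intro word_eval_closed; auto)+
  ultimately have c: "c \<in> carrier G" and A: "A \<in> carrier G" and B: "B \<in> carrier G"
    using assms(1) by (simp_all add: c_def A_def B_def)
  have "comm G s (word_eval (w # ws)) = c \<otimes> (A \<otimes> B)"
    using Cons w ws assms(1) by (simp add: comm_mult_right c_def A_def B_def)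
  also have "\<dots> = comm G s (word_eval (filter P (w # ws)))
      \<otimes> comm G s (word_eval (filter (\<lambda>w. \<not> P w) (w # ws)))"
  proof (cases "P w")
    case True
    then show ?thesis
      using w assms(1) filters by (simp add: comm_mult_right m_assoc c_def A_def B_def)
  next
    case False
    have "c \<otimes> (A \<otimes> B) = A \<otimes> (c \<otimes> B)"
      using c A B comm_central[of s w A] w assms(1) by (simp add: c_def flip: m_assoc)
    then show ?thesis
      using False w assms(1) filters by (simp add: comm_mult_right c_def A_def B_def)
  qed
  finally show ?case .
qed

locale word_metric = group G for G (structure) +
  fixes S :: "'a set"
  assumes gens_closed: "S \<subseteq> carrier G"
    and generate_gens: "generate G S = carrier G"
begin

definition letters :: "'a set" where
  "letters = S \<union> (\<lambda>s. inv s) ` S"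

lemma letters_closed: "letters \<subseteq> carrier G"
  using gens_closed by (auto simp: letters_def)

lemma inv_letters: "a \<in> letters \<Longrightarrow> inv a \<in> letters"
  using gens_closed by (auto simp: letters_def)

lemma finite_letters: "finite S \<Longrightarrow> finite letters"
  by (simp add: letters_def)

lemma word_length_eq:
  "word_length G S g = (LEAST n. \<exists>ws. length ws = n \<and> set ws \<subseteq> letters \<and> word_eval ws = g)"
  by (simp add: word_length_def letters_def word_eval_def)

lemma word_exists:
  assumes "g \<in> carrier G"
  shows "\<exists>ws. set ws \<subseteq> letters \<and> word_eval ws = g"
proof -
  have "g \<in> generate G S"
    using assms by (simp add: generate_gens)
  then show ?thesis
  proof (induct rule: generate.induct)
    case one
    show ?case by (auto intro: exI[of _ "[]"])
  next
    case (incl h)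
    then show ?case using gens_closed by (auto simp: letters_def intro!: exI[of _ "[h]"])
  next
    case (inv h)
    then show ?case using gens_closed by (auto simp: letters_def intro!: exI[of _ "[inv h]"])
  next
    case (eng h1 h2)
    then obtain ws vs where "set ws \<subseteq> letters" "word_eval ws = h1" "set vs \<subseteq> letters" "word_eval vs = h2"
      by blast
    then show ?case
      using letters_closed by (auto simp: word_eval_append intro!: exI[of _ "ws @ vs"])
  qed
qed

lemma geodesic_word_exists:
  assumes "g \<in> carrier G"
  obtains ws where "length ws = word_length G S g" "set ws \<subseteq> letters" "word_eval ws = g"
proof -
  have "\<exists>n ws. length ws = n \<and> set ws \<subseteq> letters \<and> word_eval ws = g"
    using word_exists[OF assms] by blast
  from LeastI_ex[OF this] show thesis
    using that unfolding word_length_eq by blast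
qed

lemma word_length_le:
  "set ws \<subseteq> letters \<Longrightarrow> word_length G S (word_eval ws) \<le> length ws"
  unfolding word_length_eq by (rule Least_le) blast

lemma word_length_letter: "a \<in> letters \<Longrightarrow> word_length G S a \<le> 1"
  using word_length_le[of "[a]"] letters_closed by auto

lemma word_length_one: "word_length G S \<one> = 0"
  using word_length_le[of "[]"] by simp

lemma word_length_mult:
  assumes "g \<in> carrier G" "h \<in> carrier G"
  shows "word_length G S (g \<otimes> h) \<le> word_length G S g + word_length G S h"
proof -
  obtain ws vs where ws: "length ws = word_length G S g" "set ws \<subseteq> letters" "word_eval ws = g"
    and vs: "length vs = word_length G S h" "set vs \<subseteq> letters" "word_eval vs = h"
    using geodesic_word_exists assms by metis
  then have "word_eval (ws @ vs) = g \<otimes> h"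
    using letters_closed by (simp add: word_eval_append)
  then show ?thesis
    using word_length_le[of "ws @ vs"] ws vs by simp
qed

lemma word_length_inv:
  assumes "g \<in> carrier G"
  shows "word_length G S (inv g) \<le> word_length G S g"
proof -
  obtain ws where ws: "length ws = word_length G S g" "set ws \<subseteq> letters" "word_eval ws = g"
    using geodesic_word_exists assms by metis
  then have "inv g = word_eval (rev (map (\<lambda>w. inv w) ws))"
    using letters_closed inv_word_eval[of ws] by auto
  moreover have "set (rev (map (\<lambda>w. inv w) ws)) \<subseteq> letters"
    using ws inv_letters by auto
  ultimately show ?thesis
    using word_length_le ws by fastforce
qed

lemma word_length_pow:
  assumes "g \<in> carrier G"
  shows "word_length G S (g [^] (n::nat)) \<le> n * word_length G S g"
proof (induct n)
  case (Suc n)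
  then show ?case
    using word_length_mult[of "g [^] n" g] assms by simp
qed (simp add: word_length_one)

lemma word_length_comm:
  assumes "a \<in> carrier G" "b \<in> carrier G"
  shows "word_length G S (comm G a b) \<le> 2 * (word_length G S a + word_length G S b)"
  using assms word_length_inv[of a] word_length_inv[of b]
    word_length_mult[of "a \<otimes> b \<otimes> inv a" "inv b"] word_length_mult[of "a \<otimes> b" "inv a"]
    word_length_mult[of a b]
  by (simp add: comm_def)

end

locale class2_word_metric = class2_group + word_metric
begin

lemma word_length_comm_pow:
  assumes "a \<in> carrier G" "b \<in> carrier G"
  shows "word_length G S (comm G a b [^] m) \<le> 6 * floor_sqrt m * (word_length G S a + word_length G S b)"
proof -
  define k where "k = floor_sqrt m"
  define r where "r = m - k\<^sup>2"
  define l where "l = word_length G S a + word_length G S b"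
  have m: "m = k\<^sup>2 + r" and r: "r \<le> 2 * k"
    using floor_sqrt_power2_le[of m] Suc_floor_sqrt_power2_gt[of m]
    by (simp_all add: k_def r_def power2_eq_square)
  have "comm G a b [^] m = comm G (a [^] k) (b [^] k) \<otimes> comm G a b [^] r"
    using assms by (simp add: comm_pow_pow nat_pow_mult m)
  then have "word_length G S (comm G a b [^] m)
      \<le> word_length G S (comm G (a [^] k) (b [^] k)) + word_length G S (comm G a b [^] r)"
    using assms word_length_mult by simp
  also have "\<dots> \<le> 2 * (k * word_length G S a + k * word_length G S b) + r * (2 * l)"
  proof (rule add_mono)
    show "word_length G S (comm G (a [^] k) (b [^] k)) \<le> 2 * (k * word_length G S a + k * word_length G S b)"
      using assms word_length_comm[of "a [^] k" "b [^] k"] word_length_pow[of a k] word_length_pow[of b k]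
      by simp
    show "word_length G S (comm G a b [^] r) \<le> r * (2 * l)"
      using assms word_length_pow[of "comm G a b" r] word_length_comm[of a b] mult_le_mono2
      unfolding l_def by (meson comm_closed order_trans)
  qed
  also have "\<dots> \<le> 6 * k * l"
    using mult_le_mono1[OF r, of "2 * l"] by (simp add: l_def algebra_simps)
  finally show ?thesis by (simp add: k_def l_def)
qed

lemma word_length_comm_word_eval_le:
  assumes "finite A" "A \<subseteq> carrier G" "set ws \<subseteq> A" "s \<in> carrier G"
  shows "word_length G S (comm G s (word_eval ws)) \<le> (\<Sum>a\<in>A. word_length G S (comm G s a [^] count_list ws a))"
  using assms(1-3)
proof (induct A arbitrary: ws rule: finite_induct)
  case empty
  then show ?case using assms(4) by (simp add: comm_def word_length_one)
next
  case (insert a A)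
  define vs where "vs = filter (\<lambda>w. w \<noteq> a) ws"
  have a: "a \<in> carrier G" and ws: "set ws \<subseteq> carrier G" and vs: "set vs \<subseteq> A"
    using insert.prems by (auto simp: vs_def)
  have counts: "count_list vs b = count_list ws b" if "b \<in> A" for b
    using that insert.hyps(2) unfolding vs_def by (induct ws) auto
  have "comm G s (word_eval ws) = comm G s a [^] count_list ws a \<otimes> comm G s (word_eval vs)"
    using comm_word_eval_filter[OF assms(4) ws, of "\<lambda>w. w = a"] a assms(4)
    by (simp add: word_eval_filter_eq comm_pow_right vs_def)
  moreover have "word_eval vs \<in> carrier G"
    using vs insert.prems(1) by (intro word_eval_closed) auto
  ultimately have "word_length G S (comm G s (word_eval ws))
      \<le> word_length G S (comm G s a [^] count_list ws a) + word_length G S (comm G s (word_eval vs))"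
    using a assms(4) by (simp add: word_length_mult)
  also have "\<dots> \<le> word_length G S (comm G s a [^] count_list ws a)
      + (\<Sum>b\<in>A. word_length G S (comm G s b [^] count_list ws b))"
    using insert.hyps(3)[OF _ vs] insert.prems(1) counts by simp
  finally show ?case
    using insert.hyps by simp
qed

lemma word_length_comm_le_floor_sqrt:
  assumes "finite S" "s \<in> letters" "x \<in> carrier G"
  shows "word_length G S (comm G s x) \<le> 12 * card letters * floor_sqrt (word_length G S x)"
proof -
  obtain ws where ws: "length ws = word_length G S x" "set ws \<subseteq> letters" "word_eval ws = x"
    using geodesic_word_exists assms(3) by metis
  have s: "s \<in> carrier G"
    using assms(2) letters_closed by auto
  have "word_length G S (comm G s x) \<le> (\<Sum>a\<in>letters. word_length G S (comm G s a [^] count_list ws a))"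
    using word_length_comm_word_eval_le[OF finite_letters[OF assms(1)] letters_closed ws(2) s] ws(3)
    by simp
  also have "\<dots> \<le> (\<Sum>a\<in>letters. 12 * floor_sqrt (word_length G S x))"
  proof (rule sum_mono)
    fix a assume a: "a \<in> letters"
    have "word_length G S (comm G s a [^] count_list ws a)
        \<le> 6 * floor_sqrt (count_list ws a) * (word_length G S s + word_length G S a)"
      using a letters_closed s by (intro word_length_comm_pow) auto
    also have "\<dots> \<le> 6 * floor_sqrt (word_length G S x) * 2"
    proof (intro mult_le_mono order.refl)
      show "floor_sqrt (count_list ws a) \<le> floor_sqrt (word_length G S x)"
        using mono_floor_sqrt'[OF count_le_length] ws(1) by metis
      show "word_length G S s + word_length G S a \<le> 2"
        using word_length_letter[OF assms(2)] word_length_letter[OF a] by simp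
    qed
    finally show "word_length G S (comm G s a [^] count_list ws a) \<le> 12 * floor_sqrt (word_length G S x)"
      by simp
  qed
  also have "\<dots> = 12 * card letters * floor_sqrt (word_length G S x)"
    by simp
  finally show ?thesis .
qed

lemma I_sub_eq_generate:
  assumes "x \<in> carrier G"
  shows "I_sub G x = generate G ((\<lambda>s. comm G s x) ` S)"
proof -
  interpret comm_hom: group_hom G G "\<lambda>y. comm G y x"
    using comm_left_hom[OF assms] by unfold_locales
  show ?thesis
    using comm_hom.generate_img[OF gens_closed] by (simp add: I_sub_def generate_gens)
qed

lemma subgroup_norm_I_sub_le:
  assumes "finite S" "x \<in> carrier G"
  shows "subgroup_norm G S (I_sub G x) \<le> 12 * card letters * floor_sqrt (word_length G S x)"
  unfolding subgroup_norm_def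
proof (rule Least_le, intro exI conjI)
  let ?T = "(\<lambda>s. comm G s x) ` S"
  show "finite ?T"
    using assms(1) by simp
  show "?T \<subseteq> I_sub G x" "generate G ?T = I_sub G x"
    using I_sub_eq_generate[OF assms(2)] by (auto intro: generate.incl)
  show "\<forall>h\<in>?T. word_length G S h \<le> 12 * card letters * floor_sqrt (word_length G S x)"
    using word_length_comm_le_floor_sqrt[OF assms(1) _ assms(2)] by (auto simp: letters_def)
qed

end

lemma floor_sqrt_le_sqrt: "real (floor_sqrt n) \<le> sqrt (real n)"
  using floor_sqrt_power2_le[of n] by (intro real_le_rsqrt) (simp flip: of_nat_power)

theorem mainTheorem14:
  fixes N (structure) and S :: "'a set"
  assumes "group N"
    and "finite S" and "S \<subseteq> carrier N" and "generate N S = carrier N"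
    and "torsion_free N"
    and "nilpotent_class2 N"
  shows "\<exists>C::real. C > 0 \<and> (\<forall>x\<in>carrier N.
           real (subgroup_norm N S (I_sub N x)) \<le> C * sqrt (real (word_length N S x)))"
proof -
  interpret class2_group N
    using assms(1,6) by (rule class2_group_if_nilpotent_class2)
  interpret class2_word_metric N S
    by unfold_locales (use assms in auto)
  define C where "C = 12 * real (card letters) + 1"
  have "real (subgroup_norm N S (I_sub N x)) \<le> C * sqrt (real (word_length N S x))"
    if "x \<in> carrier N" for x
  proof -
    have "real (subgroup_norm N S (I_sub N x))
        \<le> 12 * real (card letters) * real (floor_sqrt (word_length N S x))"
      using of_nat_mono[OF subgroup_norm_I_sub_le[OF assms(2) that]] by simp
    also have "\<dots> \<le> C * sqrt (real (word_length N S x))"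
      unfolding C_def by (intro mult_mono floor_sqrt_le_sqrt) auto
    finally show ?thesis .
  qed
  moreover have "C > 0"
    by (simp add: C_def add_nonneg_pos)
  ultimately show ?thesis
    by blast
qed

end
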